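(* In the setting of the Jordan plane $A_J=k\langle x_1,x_2\rangle/(x_2x_1-x_1x_2-x_1^2)$ with a right $K$-comodule algebra structure $\rho(x_i)=x_1\otimes a_{1i}+x_2\otimes a_{2i}$, $K$ a Hopf algebra with bijective antipode $S$, and homological codeterminant ${\sf D}$, we have $$S^2(a_{11})={\sf D}(a_{11}-2a_{21}){\sf D}^{-1},\quad S^2(a_{12})={\sf D}(a_{12}+2a_{11}-2a_{22}-4a_{21}){\sf D}^{-1},$$ $$S^2(a_{21})={\sf D}a_{21}{\sf D}^{-1},\quad S^2(a_{22})={\sf D}(a_{22}+2a_{21}){\sf D}^{-1}.$$
   Context: The Ext-algebra $E$ of $A_J$ is a left $K$-comodule algebra via $\rho^!(x_i^* )=\sum_s a_{is}\otimes x_s^*$ on $E_1=(A_1)^*$; the homological codeterminant is the grouplike ${\sf D}\in K$ with $\rho^!(\mathfrak e)={\sf D}\otimes\mathfrak e$ for $\mathfrak e$ spanning $E_2$. *)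

theory Defs
  imports Main "HOL-Library.Poly_Mapping"
begin

text \<open>
  A formal k-linear combination of "pure tensors" a1 (x) ... (x) an is an element of
  the free vector space  'K list =>0 'k.  The tensor power K^(x)n is the quotient of
  the length-n part by the subspace tker spanned by the multilinearity relators
  (additivity and k-homogeneity in every tensor slot); tensor equality is teq.
  The scalar action of k on K is the parameter sc.
\<close>

inductive tker :: "('k::field \<Rightarrow> 'K::ring_1 \<Rightarrow> 'K) \<Rightarrow> ('K list \<Rightarrow>\<^sub>0 'k) \<Rightarrow> bool"
  for sc where
  tker_zero: "tker sc 0"
| tker_add: "tker sc u \<Longrightarrow>
     tker sc (u + Poly_Mapping.single (xs @ (a + b) # ys) c
                - Poly_Mapping.single (xs @ a # ys) c - Poly_Mapping.single (xs @ b # ys) c)"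
| tker_scale: "tker sc u \<Longrightarrow>
     tker sc (u + Poly_Mapping.single (xs @ sc d a # ys) c
                - Poly_Mapping.single (xs @ a # ys) (c * d))"

definition teq :: "('k::field \<Rightarrow> 'K::ring_1 \<Rightarrow> 'K) \<Rightarrow> ('K list \<Rightarrow>\<^sub>0 'k) \<Rightarrow> ('K list \<Rightarrow>\<^sub>0 'k) \<Rightarrow> bool"
  where "teq sc u v \<longleftrightarrow> tker sc (u - v)"

definition pt :: "'K list \<Rightarrow> ('K list \<Rightarrow>\<^sub>0 'k::field)"
  where "pt xs = Poly_Mapping.single xs 1"

definition tsmult :: "'k::field \<Rightarrow> ('K list \<Rightarrow>\<^sub>0 'k) \<Rightarrow> ('K list \<Rightarrow>\<^sub>0 'k)"
  where "tsmult c u = Poly_Mapping.map (\<lambda>x. c * x) u"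

definition tens :: "('K list \<Rightarrow>\<^sub>0 'k::field) \<Rightarrow> ('K list \<Rightarrow>\<^sub>0 'k) \<Rightarrow> ('K list \<Rightarrow>\<^sub>0 'k)"
  where "tens u v = (\<Sum>xs\<in>Poly_Mapping.keys u. \<Sum>ys\<in>Poly_Mapping.keys v.
                       Poly_Mapping.single (xs @ ys) (Poly_Mapping.lookup u xs * Poly_Mapping.lookup v ys))"

definition tmul :: "('K::ring_1 list \<Rightarrow>\<^sub>0 'k::field) \<Rightarrow> ('K list \<Rightarrow>\<^sub>0 'k) \<Rightarrow> ('K list \<Rightarrow>\<^sub>0 'k)"
  where "tmul u v = (\<Sum>xs\<in>Poly_Mapping.keys u. \<Sum>ys\<in>Poly_Mapping.keys v.
                       Poly_Mapping.single (map2 (*) xs ys) (Poly_Mapping.lookup u xs * Poly_Mapping.lookup v ys))"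

definition onfirst :: "('K \<Rightarrow> ('K list \<Rightarrow>\<^sub>0 'k::field)) \<Rightarrow> ('K list \<Rightarrow>\<^sub>0 'k) \<Rightarrow> ('K list \<Rightarrow>\<^sub>0 'k)"
  \<comment> \<open>F (x) id (x) ... (x) id, applied to the first tensor factor\<close>
  where "onfirst F u = (\<Sum>xs\<in>Poly_Mapping.keys u. tsmult (Poly_Mapping.lookup u xs) (tens (F (hd xs)) (pt (tl xs))))"

definition onlast :: "('K \<Rightarrow> ('K list \<Rightarrow>\<^sub>0 'k::field)) \<Rightarrow> ('K list \<Rightarrow>\<^sub>0 'k) \<Rightarrow> ('K list \<Rightarrow>\<^sub>0 'k)"
  \<comment> \<open>id (x) ... (x) id (x) F, applied to the last tensor factor\<close>
  where "onlast F u = (\<Sum>xs\<in>Poly_Mapping.keys u. tsmult (Poly_Mapping.lookup u xs) (tens (pt (butlast xs)) (F (last xs))))"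

definition k_algebra :: "('k::field \<Rightarrow> 'K::ring_1 \<Rightarrow> 'K) \<Rightarrow> bool" where
  "k_algebra sc \<longleftrightarrow>
     (\<forall>c x y. sc c (x + y) = sc c x + sc c y) \<and>
     (\<forall>c d x. sc (c + d) x = sc c x + sc d x) \<and>
     (\<forall>c d x. sc (c * d) x = sc c (sc d x)) \<and>
     (\<forall>x. sc 1 x = x) \<and>
     (\<forall>c x y. sc c (x * y) = sc c x * y \<and> sc c (x * y) = x * sc c y)"

text \<open>The maps m o (S (x) id) and m o (id (x) S) are evaluated on the representative
  Delta x (well defined since S is linear).\<close>
definition hopf_algebra ::
  "('k::field \<Rightarrow> 'K::ring_1 \<Rightarrow> 'K) \<Rightarrow> ('K \<Rightarrow> ('K list \<Rightarrow>\<^sub>0 'k)) \<Rightarrow> ('K \<Rightarrow> 'k) \<Rightarrow> ('K \<Rightarrow> 'K) \<Rightarrow> bool"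
  where
  "hopf_algebra sc \<Delta> \<epsilon> S \<longleftrightarrow>
     k_algebra sc \<and>
     \<comment> \<open>comultiplication: linear algebra map K -> K (x) K, coassociative\<close>
     (\<forall>x. \<forall>xs\<in>Poly_Mapping.keys (\<Delta> x). length xs = 2) \<and>
     (\<forall>x y. teq sc (\<Delta> (x + y)) (\<Delta> x + \<Delta> y)) \<and>
     (\<forall>c x. teq sc (\<Delta> (sc c x)) (tsmult c (\<Delta> x))) \<and>
     (\<forall>x y. teq sc (\<Delta> (x * y)) (tmul (\<Delta> x) (\<Delta> y))) \<and>
     teq sc (\<Delta> 1) (pt [1, 1]) \<and>
     (\<forall>x. teq sc (onfirst \<Delta> (\<Delta> x)) (onlast \<Delta> (\<Delta> x))) \<and>
     \<comment> \<open>counit: linear algebra map K -> k\<close>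
     (\<forall>x y. \<epsilon> (x + y) = \<epsilon> x + \<epsilon> y) \<and>
     (\<forall>c x. \<epsilon> (sc c x) = c * \<epsilon> x) \<and>
     (\<forall>x y. \<epsilon> (x * y) = \<epsilon> x * \<epsilon> y) \<and>
     \<epsilon> 1 = 1 \<and>
     (\<forall>x. teq sc (onfirst (\<lambda>a. tsmult (\<epsilon> a) (pt [])) (\<Delta> x)) (pt [x])) \<and>
     (\<forall>x. teq sc (onlast (\<lambda>a. tsmult (\<epsilon> a) (pt [])) (\<Delta> x)) (pt [x])) \<and>
     \<comment> \<open>antipode: linear, convolution inverse of id, bijective\<close>
     (\<forall>x y. S (x + y) = S x + S y) \<and>
     (\<forall>c x. S (sc c x) = sc c (S x)) \<and>
     (\<forall>x. (\<Sum>xs\<in>Poly_Mapping.keys (\<Delta> x). sc (Poly_Mapping.lookup (\<Delta> x) xs) (S (xs ! 0) * xs ! 1)) = sc (\<epsilon> x) 1) \<and>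
     (\<forall>x. (\<Sum>xs\<in>Poly_Mapping.keys (\<Delta> x). sc (Poly_Mapping.lookup (\<Delta> x) xs) (xs ! 0 * S (xs ! 1))) = sc (\<epsilon> x) 1) \<and>
     bij S"

text \<open>Jordan plane A_J = k<x1,x2>/(r), r = x2 x1 - x1 x2 - x1^2.
  jr i j is the coefficient of the word x_i x_j in r (indices 1,2).\<close>
definition jr :: "nat \<Rightarrow> nat \<Rightarrow> 'k::field" where
  "jr i j = (if i = 2 \<and> j = 1 then 1 else if i = 1 \<and> j = 2 then -1
             else if i = 1 \<and> j = 1 then -1 else 0)"

text \<open>rho(x_i) = x1 (x) a 1 i + x2 (x) a 2 i  is a right K-comodule algebra coaction on A_J.
  With x1, x2 linearly independent and A_J(2) = (V (x) V)/k r, this means exactly: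
  (1) rho extends to an algebra map A_J -> A_J (x) K, i.e. the image
      sum_{ij} x_i x_j (x) (a i 2 a j 1 - a i 1 a j 2 - a i 1 a j 1) of r lies in k r (x) K;
  (2) coassociativity (rho (x) id) rho = (id (x) Delta) rho on generators;
  (3) counitality (id (x) eps) rho = id on generators.\<close>
definition jordan_comodule_algebra ::
  "('k::field \<Rightarrow> 'K::ring_1 \<Rightarrow> 'K) \<Rightarrow> ('K \<Rightarrow> ('K list \<Rightarrow>\<^sub>0 'k)) \<Rightarrow> ('K \<Rightarrow> 'k)
   \<Rightarrow> (nat \<Rightarrow> nat \<Rightarrow> 'K) \<Rightarrow> bool" where
  "jordan_comodule_algebra sc \<Delta> \<epsilon> a \<longleftrightarrow>
     (\<exists>z. \<forall>i\<in>{1,2}. \<forall>j\<in>{1,2}.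
        a i 2 * a j 1 - a i 1 * a j 2 - a i 1 * a j 1 = sc (jr i j) z) \<and>
     (\<forall>i\<in>{1,2}. \<forall>j\<in>{1,2}. teq sc (\<Delta> (a i j)) (\<Sum>s\<in>{1,2}. pt [a i s, a s j])) \<and>
     (\<forall>i\<in>{1,2}. \<forall>j\<in>{1,2}. \<epsilon> (a i j) = (if i = j then 1 else 0))"

text \<open>E = A_J^! = T(V^* )/(R^perp), pairing
  <x_s^* x_t^*, x_a x_b> = delta_sa delta_tb.  E_2 is spanned by e = class of x_2^* x_1^*
  (<x_2^* x_1^*, r> = 1), and x_s^* x_t^* = jr s t . e in E.  Hence
  rho^!(e) = rho^!(x_2^* ) rho^!(x_1^* ) = sum_{s,t} a 2 s a 1 t (x) x_s^* x_t^*
           = (sum_{s,t} jr s t . a 2 s a 1 t) (x) e.\<close>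
definition hcodet :: "('k::field \<Rightarrow> 'K::ring_1 \<Rightarrow> 'K) \<Rightarrow> (nat \<Rightarrow> nat \<Rightarrow> 'K) \<Rightarrow> 'K" where
  "hcodet sc a = (\<Sum>s\<in>{1::nat,2}. \<Sum>t\<in>{1::nat,2}. sc (jr s t) (a 2 s * a 1 t))"

end

(*
  The comodule axioms say that a = (a i j) is a multiplicative matrix,
  Delta (a i j) = sum_s a i s (x) a s j and eps (a i j) = delta i j, so the antipode axioms make
  S(a) a two-sided inverse of a.  Applying Delta to D = a 2 2 a 1 1 - a 2 1 a 1 2 - a 2 1 a 1 1
  gives sum_{u,v} a 2 u a 1 v (x) r u v, where r u v is the defining relation of A_J evaluated on
  rows u and v of a; as r u v = jr u v . D, this collapses to D (x) D, so D is grouplike with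
  inverse S D.  The relations r u v, read as linear equations for S(a) a = 1, express S(a) as a
  linear combination of the a i j times S D.  Since S D is grouplike too, a S D is again a
  multiplicative matrix; its left inverse S(a S D) must agree with its right inverse D S(a), and
  applying S to the formula for S(a) yields S^2(a) as a combination of the a i j conjugated by D.
*)
theory Submission
  imports Defs
begin

section \<open>Formal tensors\<close>

definition lin_ext :: "('a \<Rightarrow> 'b::zero \<Rightarrow> 'c::ab_group_add) \<Rightarrow> ('a \<Rightarrow>\<^sub>0 'b) \<Rightarrow> 'c"
  where "lin_ext h u = (\<Sum>l\<in>Poly_Mapping.keys u. h l (Poly_Mapping.lookup u l))"

lemma lin_ext_zero [simp]: "lin_ext h 0 = 0"
  by (simp add: lin_ext_def)

lemma lin_ext_single:
  assumes "h l 0 = 0"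
  shows "lin_ext h (Poly_Mapping.single l c) = h l c"
  using assms by (simp add: lin_ext_def)

lemma lin_ext_superset:
  assumes "finite A" "Poly_Mapping.keys u \<subseteq> A" "\<And>l. h l 0 = 0"
  shows "lin_ext h u = (\<Sum>l\<in>A. h l (Poly_Mapping.lookup u l))"
  unfolding lin_ext_def
  by (rule sum.mono_neutral_left) (use assms in \<open>auto simp: not_in_keys_iff_lookup_eq_zero\<close>)

lemma lin_ext_add:
  fixes h :: "'a \<Rightarrow> 'b::ab_group_add \<Rightarrow> 'c::ab_group_add"
  assumes additive: "\<And>l c d. h l (c + d) = h l c + h l d"
  shows "lin_ext h (u + v) = lin_ext h u + lin_ext h v"
proof -
  have h0: "h l 0 = 0" for l
    using additive[of l 0 0] by simp
  define A where "A = Poly_Mapping.keys u \<union> Poly_Mapping.keys v"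
  have "finite A" "Poly_Mapping.keys (u + v) \<subseteq> A" "Poly_Mapping.keys u \<subseteq> A" "Poly_Mapping.keys v \<subseteq> A"
    unfolding A_def using keys_add[of u v] by auto
  then show ?thesis
    by (simp add: lin_ext_superset[where h = h] h0 lookup_add additive sum.distrib)
qed

lemma lin_ext_diff:
  fixes h :: "'a \<Rightarrow> 'b::ab_group_add \<Rightarrow> 'c::ab_group_add"
  assumes "\<And>l c d. h l (c + d) = h l c + h l d"
  shows "lin_ext h (u - v) = lin_ext h u - lin_ext h v"
  using lin_ext_add[of h "u - v" v] assms by simp

lemma lin_ext_add_fun: "lin_ext (\<lambda>l c. f l c + g l c) u = lin_ext f u + lin_ext g u"
  by (simp add: lin_ext_def sum.distrib)

lemma lin_ext_single_id: "lin_ext Poly_Mapping.single u = u"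
  by (rule poly_mapping_eqI)
    (simp add: lin_ext_def lookup_sum lookup_single when_def not_in_keys_iff_lookup_eq_zero sum.delta)

definition two_tensor :: "('K list \<Rightarrow>\<^sub>0 'k::zero) \<Rightarrow> bool"
  where "two_tensor u \<longleftrightarrow> (\<forall>l\<in>Poly_Mapping.keys u. length l = 2)"

lemma length_2_cases: "length l = 2 \<Longrightarrow> (\<And>x y. l = [x, y] \<Longrightarrow> P) \<Longrightarrow> P"
  by (cases l; cases "tl l") auto

lemma two_tensor_zero [simp]: "two_tensor 0"
  by (simp add: two_tensor_def)

lemma two_tensor_single: "length l = 2 \<Longrightarrow> two_tensor (Poly_Mapping.single l c)"
  by (simp add: two_tensor_def)

lemma two_tensor_pt [simp]: "two_tensor (pt [x, y])"
  by (simp add: two_tensor_def pt_def)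

lemma two_tensor_add: "two_tensor u \<Longrightarrow> two_tensor v \<Longrightarrow> two_tensor (u + v)"
  unfolding two_tensor_def using keys_add[of u v] by blast

lemma two_tensor_diff:
  "two_tensor (u::'K list \<Rightarrow>\<^sub>0 'k::ab_group_add) \<Longrightarrow> two_tensor v \<Longrightarrow> two_tensor (u - v)"
  unfolding two_tensor_def using keys_diff[of u v] by blast

lemma two_tensor_sum: "(\<And>i. i \<in> A \<Longrightarrow> two_tensor (f i)) \<Longrightarrow> two_tensor (\<Sum>i\<in>A. f i)"
  by (induction A rule: infinite_finite_induct) (auto intro: two_tensor_add)

lemma two_tensor_tmul: "two_tensor u \<Longrightarrow> two_tensor v \<Longrightarrow> two_tensor (tmul u v)"
  unfolding tmul_def by (intro two_tensor_sum two_tensor_single) (auto simp: two_tensor_def)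

definition pm_image :: "('a \<Rightarrow> 'b) \<Rightarrow> 'k::comm_ring_1 \<Rightarrow> ('a \<Rightarrow>\<^sub>0 'k) \<Rightarrow> ('b \<Rightarrow>\<^sub>0 'k)"
  where "pm_image f e u = lin_ext (\<lambda>l c. Poly_Mapping.single (f l) (c * e)) u"

lemma pm_image_add: "pm_image f e (u + v) = pm_image f e u + pm_image f e v"
  unfolding pm_image_def by (rule lin_ext_add) (simp add: distrib_right single_add)

lemma pm_image_diff: "pm_image f e (u - v) = pm_image f e u - pm_image f e v"
  unfolding pm_image_def by (rule lin_ext_diff) (simp add: distrib_right single_add)

lemma pm_image_single: "pm_image f e (Poly_Mapping.single l c) = Poly_Mapping.single (f l) (c * e)"
  unfolding pm_image_def by (simp add: lin_ext_single)

lemma pm_image_zero [simp]: "pm_image f e 0 = 0"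
  by (simp add: pm_image_def)

lemma pm_image_sum: "pm_image f e (\<Sum>i\<in>A. F i) = (\<Sum>i\<in>A. pm_image f e (F i))"
  by (induction A rule: infinite_finite_induct) (simp_all add: pm_image_add)

lemma pm_image_cong:
  "(\<And>l. l \<in> Poly_Mapping.keys w \<Longrightarrow> f l = g l) \<Longrightarrow> pm_image f e w = pm_image g e w"
  by (simp add: pm_image_def lin_ext_def)

lemma pm_image_pm_image: "pm_image f e (pm_image g e' w) = pm_image (f \<circ> g) (e' * e) w"
  by (simp add: pm_image_def[of g] lin_ext_def pm_image_sum pm_image_single mult.assoc)
    (simp add: pm_image_def lin_ext_def)

lemma pm_image_id_one: "pm_image id 1 w = w"
  by (simp add: pm_image_def lin_ext_single_id)

lemma tmul_single_left:
  "tmul (Poly_Mapping.single l c) w = pm_image (map2 (*) l) c w"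
  by (cases "c = 0") (simp_all add: tmul_def pm_image_def lin_ext_def mult.commute)

lemma tmul_single_right:
  "tmul w (Poly_Mapping.single l c) = pm_image (\<lambda>xs. map2 (*) xs l) c w"
  by (cases "c = 0") (simp_all add: tmul_def pm_image_def lin_ext_def)

lemma tmul_zero_left [simp]: "tmul 0 v = 0"
  by (simp add: tmul_def)

lemma tmul_zero_right [simp]: "tmul u 0 = 0"
  by (simp add: tmul_def)

lemma tmul_as_lin_ext:
  "tmul u v = lin_ext (\<lambda>xs c. lin_ext (\<lambda>ys d. Poly_Mapping.single (map2 (*) xs ys) (c * d)) v) u"
  by (simp add: tmul_def lin_ext_def)

lemma tmul_add_left: "tmul (u + u') v = tmul u v + tmul u' v"
  unfolding tmul_as_lin_ext
  by (rule lin_ext_add) (simp add: distrib_right single_add lin_ext_add_fun[symmetric])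

lemma tmul_add_right: "tmul u (v + v') = tmul u v + tmul u v'"
proof -
  have "lin_ext (\<lambda>ys d. Poly_Mapping.single (map2 (*) xs ys) (c * d)) (v + v') =
      lin_ext (\<lambda>ys d. Poly_Mapping.single (map2 (*) xs ys) (c * d)) v +
      lin_ext (\<lambda>ys d. Poly_Mapping.single (map2 (*) xs ys) (c * d)) v'" for xs c
    by (rule lin_ext_add) (simp add: distrib_left single_add)
  then show ?thesis
    by (simp add: tmul_as_lin_ext lin_ext_add_fun)
qed

lemma tmul_diff_left: "tmul (u - u') v = tmul u v - tmul u' v"
  using tmul_add_left[of "u - u'" u' v] by (simp add: algebra_simps)

lemma tmul_diff_right: "tmul u (v - v') = tmul u v - tmul u v'"
  using tmul_add_right[of u "v - v'" v'] by (simp add: algebra_simps)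

lemma tmul_sum_left: "tmul (\<Sum>i\<in>A. f i) v = (\<Sum>i\<in>A. tmul (f i) v)"
  by (induction A rule: infinite_finite_induct) (auto simp: tmul_add_left)

lemma tmul_sum_right: "tmul u (\<Sum>i\<in>A. f i) = (\<Sum>i\<in>A. tmul u (f i))"
  by (induction A rule: infinite_finite_induct) (auto simp: tmul_add_right)

lemma tmul_pt_pt: "tmul (pt [x, y]) (pt [x', y']) = pt [x * x', y * y']"
  by (simp add: pt_def tmul_single_left pm_image_single)

lemma tmul_pt_pt_left_cancel:
  assumes "two_tensor w" "x' * x = 1" "y' * y = 1"
  shows "tmul (pt [x', y']) (tmul (pt [x, y]) w) = w"
proof -
  have "tmul (pt [x', y']) (tmul (pt [x, y]) w) = pm_image (map2 (*) [x', y'] \<circ> map2 (*) [x, y]) 1 w"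
    by (simp add: pt_def tmul_single_left pm_image_pm_image)
  also have "\<dots> = pm_image id 1 w"
  proof (rule pm_image_cong)
    fix l assume "l \<in> Poly_Mapping.keys w"
    then obtain a b where "l = [a, b]"
      using assms(1) two_tensor_def length_2_cases by metis
    then show "(map2 (*) [x', y'] \<circ> map2 (*) [x, y]) l = id l"
      by (simp add: mult.assoc[symmetric] assms(2,3))
  qed
  finally show ?thesis
    by (simp add: pm_image_id_one)
qed

lemma tmul_sum_pt:
  "tmul (\<Sum>s\<in>A. pt [f s, g s]) (\<Sum>t\<in>B. pt [f' t, g' t]) = (\<Sum>s\<in>A. \<Sum>t\<in>B. pt [f s * f' t, g s * g' t])"
  unfolding tmul_sum_left by (simp add: tmul_sum_right tmul_pt_pt)

section \<open>Relations in the tensor square\<close>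

text \<open>On two-tensors, \<^const>\<open>teq\<close> reduces to \<open>tker2\<close> (see \<open>teq_imp_tker2\<close>); only the
  relators between words of length two occur, which makes closure under \<^const>\<open>tmul\<close> provable.\<close>

inductive tker2 :: "('k::field \<Rightarrow> 'K::ring_1 \<Rightarrow> 'K) \<Rightarrow> ('K list \<Rightarrow>\<^sub>0 'k) \<Rightarrow> bool"
  for sc where
  zero: "tker2 sc 0"
| add_fst: "tker2 sc u \<Longrightarrow> tker2 sc (u + (Poly_Mapping.single [a + b, y] c
      - Poly_Mapping.single [a, y] c - Poly_Mapping.single [b, y] c))"
| add_snd: "tker2 sc u \<Longrightarrow> tker2 sc (u + (Poly_Mapping.single [y, a + b] c
      - Poly_Mapping.single [y, a] c - Poly_Mapping.single [y, b] c))"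
| scale_fst: "tker2 sc u \<Longrightarrow> tker2 sc (u + (Poly_Mapping.single [sc d a, y] c
      - Poly_Mapping.single [a, y] (c * d)))"
| scale_snd: "tker2 sc u \<Longrightarrow> tker2 sc (u + (Poly_Mapping.single [y, sc d a] c
      - Poly_Mapping.single [y, a] (c * d)))"

lemma tker2_add: "tker2 sc v \<Longrightarrow> tker2 sc u \<Longrightarrow> tker2 sc (u + v)"
proof (induction v rule: tker2.induct)
  case zero
  then show ?case by simp
next
  case (add_fst v a b y c)
  then show ?case using tker2.add_fst[of sc "u + v"] by (simp add: add.assoc)
next
  case (add_snd v y a b c)
  then show ?case using tker2.add_snd[of sc "u + v"] by (simp add: add.assoc)
next
  case (scale_fst v d a y c)
  then show ?case using tker2.scale_fst[of sc "u + v"] by (simp add: add.assoc)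
next
  case (scale_snd v y d a c)
  then show ?case using tker2.scale_snd[of sc "u + v"] by (simp add: add.assoc)
qed

lemma tker2_pm_image:
  assumes slots: "\<And>x y. f [x, y] = [g x, h y]"
    and g: "\<And>x y. g (x + y) = g x + g y" "\<And>d x. g (sc d x) = sc d (g x)"
    and h: "\<And>x y. h (x + y) = h x + h y" "\<And>d x. h (sc d x) = sc d (h x)"
  shows "tker2 sc w \<Longrightarrow> tker2 sc (pm_image f e w)"
proof (induction w rule: tker2.induct)
  case zero
  then show ?case by (simp add: pm_image_def tker2.zero)
next
  case (add_fst u a b y c)
  then show ?case
    using tker2.add_fst[of sc "pm_image f e u" "g a" "g b" "h y" "c * e"]
    by (simp add: pm_image_add pm_image_diff pm_image_single slots g)
next
  case (add_snd u y a b c)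
  then show ?case
    using tker2.add_snd[of sc "pm_image f e u" "g y" "h a" "h b" "c * e"]
    by (simp add: pm_image_add pm_image_diff pm_image_single slots h)
next
  case (scale_fst u d a y c)
  then show ?case
    using tker2.scale_fst[of sc "pm_image f e u" d "g a" "h y" "c * e"]
    by (simp add: pm_image_add pm_image_diff pm_image_single slots g mult_ac)
next
  case (scale_snd u y d a c)
  then show ?case
    using tker2.scale_snd[of sc "pm_image f e u" "g y" d "h a" "c * e"]
    by (simp add: pm_image_add pm_image_diff pm_image_single slots h mult_ac)
qed

lemma pm_image_id_minus_one: "pm_image id (- 1) u = - u"
proof -
  have "pm_image id (- 1) u = lin_ext (\<lambda>l c. - Poly_Mapping.single l c) u"
    by (simp add: pm_image_def single_uminus)
  also have "\<dots> = - lin_ext Poly_Mapping.single u"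
    by (simp add: lin_ext_def sum_negf)
  finally show ?thesis
    by (simp add: lin_ext_single_id)
qed

lemma tker2_uminus: "tker2 sc v \<Longrightarrow> tker2 sc (- v)"
  using tker2_pm_image[of id id id sc v "- 1"] by (simp add: pm_image_id_minus_one)

lemma tker2_diff: "tker2 sc u \<Longrightarrow> tker2 sc v \<Longrightarrow> tker2 sc (u - v)"
  using tker2_add[OF tker2_uminus[of sc v], of u] by simp

lemma tker2_sum: "(\<And>i. i \<in> A \<Longrightarrow> tker2 sc (f i)) \<Longrightarrow> tker2 sc (\<Sum>i\<in>A. f i)"
  by (induction A rule: infinite_finite_induct) (auto intro: tker2.zero tker2_add)

lemma tker2_pt_fst_add: "tker2 sc (pt [x + y, z] - pt [x, z] - pt [y, z])"
  using tker2.add_fst[OF tker2.zero, of sc x y z 1] by (simp add: pt_def)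

lemma tker2_pt_snd_diff: "tker2 sc (pt [p, x - y] - pt [p, x] + pt [p, y])"
  using tker2_uminus[OF tker2.add_snd[OF tker2.zero, of sc p "x - y" y 1]]
  by (simp add: pt_def algebra_simps)

lemma tker2_pt_snd_diff_diff: "tker2 sc (pt [p, x] - pt [p, y] - pt [p, w] - pt [p, x - y - w])"
  using tker2_uminus[OF tker2_add[OF tker2_pt_snd_diff[of sc p "x - y" w] tker2_pt_snd_diff[of sc p x y]]]
  by (simp add: algebra_simps)

lemma tker2_sym: "tker2 sc (u - v) \<Longrightarrow> tker2 sc (v - u)"
  using tker2_uminus[of sc "u - v"] by simp

lemma tker2_trans: "tker2 sc (u - v) \<Longrightarrow> tker2 sc (v - w) \<Longrightarrow> tker2 sc (u - w)"
  using tker2_add[of sc "v - w" "u - v"] by simp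

lemma tker2_pt_fst_zero: "tker2 sc (pt [0, z])"
  using tker2_uminus[OF tker2_pt_fst_add[of sc 0 0 z]] by simp

lemma tker2_pt_fst_sum: "tker2 sc (pt [\<Sum>i\<in>A. f i, z] - (\<Sum>i\<in>A. pt [f i, z]))"
proof (induction A rule: infinite_finite_induct)
  case (insert i A)
  have split: "pt [\<Sum>i\<in>insert i A. f i, z] - (\<Sum>i\<in>insert i A. pt [f i, z]) =
      (pt [f i + (\<Sum>i\<in>A. f i), z] - pt [f i, z] - pt [\<Sum>i\<in>A. f i, z])
      + (pt [\<Sum>i\<in>A. f i, z] - (\<Sum>i\<in>A. pt [f i, z]))"
    using insert by simp
  show ?case
    unfolding split by (rule tker2_add[OF insert.IH tker2_pt_fst_add])
qed (simp_all add: tker2_pt_fst_zero)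

lemma tker2_pt_fst_double_sum:
  "tker2 sc (pt [\<Sum>i\<in>A. \<Sum>j\<in>B i. f i j, z] - (\<Sum>i\<in>A. \<Sum>j\<in>B i. pt [f i j, z]))"
proof -
  have "tker2 sc ((\<Sum>i\<in>A. pt [\<Sum>j\<in>B i. f i j, z] - (\<Sum>j\<in>B i. pt [f i j, z]))
      + (pt [\<Sum>i\<in>A. \<Sum>j\<in>B i. f i j, z] - (\<Sum>i\<in>A. pt [\<Sum>j\<in>B i. f i j, z])))"
    by (intro tker2_add tker2_sum tker2_pt_fst_sum)
  then show ?thesis
    by (simp add: sum_subtractf)
qed

lemma tker2_pt_scale: "tker2 sc (pt [p, sc c z] - pt [sc c p, z])"
  using tker2_diff[OF tker2.scale_snd[OF tker2.zero, of sc p c z 1]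
      tker2.scale_fst[OF tker2.zero, of sc c p z 1]]
  by (simp add: pt_def)

definition deg2_part :: "('K list \<Rightarrow>\<^sub>0 'k::ab_group_add) \<Rightarrow> ('K list \<Rightarrow>\<^sub>0 'k)" where
  "deg2_part u = lin_ext (\<lambda>l c. if length l = 2 then Poly_Mapping.single l c else 0) u"

lemma deg2_part_add: "deg2_part (u + v) = deg2_part u + deg2_part v"
  unfolding deg2_part_def by (rule lin_ext_add) (simp add: single_add)

lemma deg2_part_diff: "deg2_part (u - v) = deg2_part u - deg2_part v"
  unfolding deg2_part_def by (rule lin_ext_diff) (simp add: single_add)

lemma deg2_part_single:
  "deg2_part (Poly_Mapping.single l c) = (if length l = 2 then Poly_Mapping.single l c else 0)"
  unfolding deg2_part_def by (rule lin_ext_single) simp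

lemma deg2_part_two_tensor:
  assumes "two_tensor u"
  shows "deg2_part u = u"
proof -
  have "deg2_part u = lin_ext Poly_Mapping.single u"
    unfolding deg2_part_def lin_ext_def by (rule sum.cong) (use assms in \<open>auto simp: two_tensor_def\<close>)
  then show ?thesis
    by (simp add: lin_ext_single_id)
qed

lemma append_length_1_cases:
  assumes "length xs + length ys = 1"
  obtains y where "xs @ z # ys = [z, y]" "xs = []" "ys = [y]"
    | x where "xs @ z # ys = [x, z]" "xs = [x]" "ys = []"
  using assms by (cases xs; cases ys) auto

lemma tker_imp_tker2: "tker sc u \<Longrightarrow> tker2 sc (deg2_part u)"
proof (induction u rule: tker.induct)
  case tker_zero
  then show ?case by (simp add: deg2_part_def tker2.zero)
next
  case (tker_add u xs a b ys c)
  show ?case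
  proof (cases "length xs + length ys = 1")
    case True
    then show ?thesis
      by (cases rule: append_length_1_cases)
        (use tker2.add_fst[OF tker_add.IH] tker2.add_snd[OF tker_add.IH] in
          \<open>simp_all add: deg2_part_add deg2_part_diff deg2_part_single add_diff_eq\<close>)
  next
    case False
    then show ?thesis
      using tker_add.IH by (simp add: deg2_part_add deg2_part_diff deg2_part_single)
  qed
next
  case (tker_scale u xs d a ys c)
  show ?case
  proof (cases "length xs + length ys = 1")
    case True
    then show ?thesis
      by (cases rule: append_length_1_cases)
        (use tker2.scale_fst[OF tker_scale.IH] tker2.scale_snd[OF tker_scale.IH] in
          \<open>simp_all add: deg2_part_add deg2_part_diff deg2_part_single add_diff_eq\<close>)
  next
    case False
    then show ?thesis
      using tker_scale.IH by (simp add: deg2_part_add deg2_part_diff deg2_part_single)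
  qed
qed

lemma teq_imp_tker2: "teq sc u v \<Longrightarrow> two_tensor u \<Longrightarrow> two_tensor v \<Longrightarrow> tker2 sc (u - v)"
  unfolding teq_def by (metis tker_imp_tker2 deg2_part_two_tensor two_tensor_diff)

definition bilin_eval :: "('k::field \<Rightarrow> 'K::ring_1 \<Rightarrow> 'K) \<Rightarrow> ('K \<Rightarrow> 'K \<Rightarrow> 'K) \<Rightarrow> ('K list \<Rightarrow>\<^sub>0 'k) \<Rightarrow> 'K"
  where "bilin_eval sc B u = lin_ext (\<lambda>l c. if length l = 2 then sc c (B (l ! 0) (l ! 1)) else 0) u"

context
  fixes sc :: "'k::field \<Rightarrow> 'K::ring_1 \<Rightarrow> 'K"
  assumes k_alg: "k_algebra sc"
begin

lemma sc_add_left: "sc (c + d) x = sc c x + sc d x"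
  using k_alg by (simp add: k_algebra_def)

lemma sc_add_right: "sc c (x + y) = sc c x + sc c y"
  using k_alg by (simp add: k_algebra_def)

lemma sc_mult: "sc (c * d) x = sc c (sc d x)"
  using k_alg by (simp add: k_algebra_def)

lemma sc_one: "sc 1 x = x"
  using k_alg by (simp add: k_algebra_def)

lemma sc_mult_left: "sc c (x * y) = sc c x * y"
  using k_alg unfolding k_algebra_def by blast

lemma sc_mult_right: "sc c (x * y) = x * sc c y"
  using k_alg unfolding k_algebra_def by blast

lemma sc_zero: "sc 0 x = 0"
  using sc_add_left[of 0 0 x] by simp

lemma sc_minus: "sc (- c) x = - sc c x"
  using sc_add_left[of c "- c" x] sc_zero by (simp add: eq_neg_iff_add_eq_0 add.commute)

lemma tker2_tmul_left:
  assumes "tker2 sc w" "two_tensor v"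
  shows "tker2 sc (tmul w v)"
proof -
  have "tmul w v = (\<Sum>l\<in>Poly_Mapping.keys v. pm_image (\<lambda>xs. map2 (*) xs l) (Poly_Mapping.lookup v l) w)"
    by (subst lin_ext_single_id[symmetric]) (simp add: lin_ext_def tmul_sum_right tmul_single_right)
  also have "tker2 sc \<dots>"
  proof (rule tker2_sum)
    fix l assume "l \<in> Poly_Mapping.keys v"
    then obtain y0 y1 where "l = [y0, y1]"
      using assms(2) two_tensor_def length_2_cases by metis
    then show "tker2 sc (pm_image (\<lambda>xs. map2 (*) xs l) (Poly_Mapping.lookup v l) w)"
      by (intro tker2_pm_image[where g = "\<lambda>x. x * y0" and h = "\<lambda>x. x * y1"] assms(1))
        (simp_all add: distrib_right sc_mult_left)
  qed
  finally show ?thesis .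
qed

lemma tker2_tmul_right:
  assumes "tker2 sc w" "two_tensor v"
  shows "tker2 sc (tmul v w)"
proof -
  have "tmul v w = (\<Sum>l\<in>Poly_Mapping.keys v. pm_image (map2 (*) l) (Poly_Mapping.lookup v l) w)"
    by (subst lin_ext_single_id[symmetric]) (simp add: lin_ext_def tmul_sum_left tmul_single_left)
  also have "tker2 sc \<dots>"
  proof (rule tker2_sum)
    fix l assume "l \<in> Poly_Mapping.keys v"
    then obtain y0 y1 where "l = [y0, y1]"
      using assms(2) two_tensor_def length_2_cases by metis
    then show "tker2 sc (pm_image (map2 (*) l) (Poly_Mapping.lookup v l) w)"
      by (intro tker2_pm_image[where g = "\<lambda>x. y0 * x" and h = "\<lambda>x. y1 * x"] assms(1))
        (simp_all add: distrib_left sc_mult_right)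
  qed
  finally show ?thesis .
qed

lemma bilin_eval_add: "bilin_eval sc B (u + v) = bilin_eval sc B u + bilin_eval sc B v"
  unfolding bilin_eval_def by (rule lin_ext_add) (simp add: sc_add_left)

lemma bilin_eval_diff: "bilin_eval sc B (u - v) = bilin_eval sc B u - bilin_eval sc B v"
  unfolding bilin_eval_def by (rule lin_ext_diff) (simp add: sc_add_left)

lemma bilin_eval_sum: "bilin_eval sc B (\<Sum>i\<in>A. f i) = (\<Sum>i\<in>A. bilin_eval sc B (f i))"
  by (induction A rule: infinite_finite_induct) (simp_all add: bilin_eval_add bilin_eval_def[of _ _ 0])

lemma bilin_eval_single: "bilin_eval sc B (Poly_Mapping.single [x, y] c) = sc c (B x y)"
  unfolding bilin_eval_def by (subst lin_ext_single) (simp_all add: sc_zero)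

lemma bilin_eval_pt: "bilin_eval sc B (pt [x, y]) = B x y"
  by (simp add: pt_def bilin_eval_single sc_one)

lemma bilin_eval_two_tensor:
  "two_tensor u \<Longrightarrow>
    bilin_eval sc B u = (\<Sum>xs\<in>Poly_Mapping.keys u. sc (Poly_Mapping.lookup u xs) (B (xs ! 0) (xs ! 1)))"
  unfolding bilin_eval_def lin_ext_def by (rule sum.cong) (auto simp: two_tensor_def)

lemma bilin_eval_tker2:
  assumes B_add: "\<And>x y z. B (x + y) z = B x z + B y z" "\<And>x y z. B x (y + z) = B x y + B x z"
    and B_sc: "\<And>d x y. B (sc d x) y = sc d (B x y)" "\<And>d x y. B x (sc d y) = sc d (B x y)"
  shows "tker2 sc w \<Longrightarrow> bilin_eval sc B w = 0"
proof (induction w rule: tker2.induct)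
  case zero
  then show ?case by (simp add: bilin_eval_def)
next
  case add_fst
  then show ?case by (simp add: bilin_eval_add bilin_eval_diff bilin_eval_single B_add sc_add_right)
next
  case add_snd
  then show ?case by (simp add: bilin_eval_add bilin_eval_diff bilin_eval_single B_add sc_add_right)
next
  case scale_fst
  then show ?case by (simp add: bilin_eval_add bilin_eval_diff bilin_eval_single B_sc sc_mult)
next
  case scale_snd
  then show ?case by (simp add: bilin_eval_add bilin_eval_diff bilin_eval_single B_sc sc_mult)
qed

end

section \<open>Multiplicative matrices and grouplike elements in a Hopf algebra\<close>

lemma matrix_left_inverse_eq_right_inverse:
  fixes X B Y :: "'i \<Rightarrow> 'i \<Rightarrow> 'a::ring_1"
  assumes "finite I"
    and XB: "\<And>j l. j \<in> I \<Longrightarrow> l \<in> I \<Longrightarrow> (\<Sum>s\<in>I. X j s * B s l) = (if j = l then 1 else 0)"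
    and BY: "\<And>j l. j \<in> I \<Longrightarrow> l \<in> I \<Longrightarrow> (\<Sum>s\<in>I. B j s * Y s l) = (if j = l then 1 else 0)"
    and "j \<in> I" "l \<in> I"
  shows "X j l = Y j l"
proof -
  have "X j l = (\<Sum>s\<in>I. X j s * (if s = l then 1 else 0))"
    using assms(1,5) by (simp add: if_distrib[of "\<lambda>c. _ * c"] cong: if_cong)
  also have "\<dots> = (\<Sum>s\<in>I. X j s * (\<Sum>t\<in>I. B s t * Y t l))"
    using BY \<open>l \<in> I\<close> by simp
  also have "\<dots> = (\<Sum>t\<in>I. (\<Sum>s\<in>I. X j s * B s t) * Y t l)"
    unfolding sum_distrib_left sum_distrib_right mult.assoc by (rule sum.swap)
  also have "\<dots> = (\<Sum>t\<in>I. (if j = t then 1 else 0) * Y t l)"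
    using XB \<open>j \<in> I\<close> by simp
  also have "\<dots> = Y j l"
    using assms(1,4) by (simp add: if_distrib[of "\<lambda>c. c * _"] cong: if_cong)
  finally show ?thesis .
qed

definition multiplicative_matrix ::
  "('k::field \<Rightarrow> 'K::ring_1 \<Rightarrow> 'K) \<Rightarrow> ('K \<Rightarrow> ('K list \<Rightarrow>\<^sub>0 'k)) \<Rightarrow> ('K \<Rightarrow> 'k)
   \<Rightarrow> 'i set \<Rightarrow> ('i \<Rightarrow> 'i \<Rightarrow> 'K) \<Rightarrow> bool" where
  "multiplicative_matrix sc \<Delta> \<epsilon> I x \<longleftrightarrow>
     (\<forall>i\<in>I. \<forall>j\<in>I. tker2 sc (\<Delta> (x i j) - (\<Sum>s\<in>I. pt [x i s, x s j])) \<and>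
                    \<epsilon> (x i j) = (if i = j then 1 else 0))"

definition grouplike ::
  "('k::field \<Rightarrow> 'K::ring_1 \<Rightarrow> 'K) \<Rightarrow> ('K \<Rightarrow> ('K list \<Rightarrow>\<^sub>0 'k)) \<Rightarrow> ('K \<Rightarrow> 'k) \<Rightarrow> 'K \<Rightarrow> bool" where
  "grouplike sc \<Delta> \<epsilon> g \<longleftrightarrow> tker2 sc (\<Delta> g - pt [g, g]) \<and> \<epsilon> g = 1"

context
  fixes sc :: "'k::field \<Rightarrow> 'K::ring_1 \<Rightarrow> 'K" and \<Delta> :: "'K \<Rightarrow> ('K list \<Rightarrow>\<^sub>0 'k)"
    and \<epsilon> :: "'K \<Rightarrow> 'k" and S :: "'K \<Rightarrow> 'K"
  assumes hopf: "hopf_algebra sc \<Delta> \<epsilon> S"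
begin

lemma hopf_k_algebra: "k_algebra sc"
  using hopf by (simp add: hopf_algebra_def)

lemma two_tensor_Delta: "two_tensor (\<Delta> x)"
  using hopf by (simp add: hopf_algebra_def two_tensor_def)

lemma counit_mult: "\<epsilon> (x * y) = \<epsilon> x * \<epsilon> y"
  using hopf by (simp add: hopf_algebra_def)

lemma counit_diff: "\<epsilon> (x - y) = \<epsilon> x - \<epsilon> y"
  using hopf unfolding hopf_algebra_def by (metis add_diff_cancel_right' diff_add_cancel)

lemma antipode_add: "S (x + y) = S x + S y"
  using hopf by (simp add: hopf_algebra_def)

lemma antipode_sc: "S (sc c x) = sc c (S x)"
  using hopf by (simp add: hopf_algebra_def)

lemma antipode_diff: "S (x - y) = S x - S y"
  using antipode_add[of "x - y" y] by simp

lemma antipode_uminus: "S (- x) = - S x"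
  using antipode_diff[of 0 0] antipode_diff[of 0 x] by simp

lemma tker2_Delta_add: "tker2 sc (\<Delta> (x + y) - (\<Delta> x + \<Delta> y))"
  using hopf by (intro teq_imp_tker2 two_tensor_add two_tensor_Delta) (simp_all add: hopf_algebra_def)

lemma tker2_Delta_mult: "tker2 sc (\<Delta> (x * y) - tmul (\<Delta> x) (\<Delta> y))"
  using hopf by (intro teq_imp_tker2 two_tensor_tmul two_tensor_Delta) (simp_all add: hopf_algebra_def)

lemma tker2_Delta_one: "tker2 sc (\<Delta> 1 - pt [1, 1])"
  using hopf by (intro teq_imp_tker2 two_tensor_Delta two_tensor_pt) (simp_all add: hopf_algebra_def)

lemma tker2_Delta_diff:
  assumes "tker2 sc (\<Delta> x - u)" "tker2 sc (\<Delta> y - v)"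
  shows "tker2 sc (\<Delta> (x - y) - (u - v))"
proof -
  have "\<Delta> (x - y) - (u - v) = (\<Delta> x - u) - (\<Delta> y - v) - (\<Delta> (x - y + y) - (\<Delta> (x - y) + \<Delta> y))"
    by simp
  then show ?thesis
    using assms tker2_Delta_add by (metis tker2_diff)
qed

lemma tker2_Delta_mult_rep:
  assumes "tker2 sc (\<Delta> x - u)" "tker2 sc (\<Delta> y - v)" "two_tensor u"
  shows "tker2 sc (\<Delta> (x * y) - tmul u v)"
proof -
  have "\<Delta> (x * y) - tmul u v =
      (\<Delta> (x * y) - tmul (\<Delta> x) (\<Delta> y)) + tmul (\<Delta> x - u) (\<Delta> y) + tmul u (\<Delta> y - v)"
    by (simp add: tmul_diff_left tmul_diff_right)
  then show ?thesis
    using tker2_Delta_mult tker2_tmul_left[OF hopf_k_algebra assms(1) two_tensor_Delta]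
      tker2_tmul_right[OF hopf_k_algebra assms(2,3)]
    by (metis tker2_add)
qed

lemma antipode_left_rep:
  assumes "tker2 sc (\<Delta> x - u)"
  shows "bilin_eval sc (\<lambda>y z. S y * z) u = sc (\<epsilon> x) 1"
proof -
  have "bilin_eval sc (\<lambda>y z. S y * z) (\<Delta> x) = sc (\<epsilon> x) 1"
    using hopf by (simp add: bilin_eval_two_tensor[OF hopf_k_algebra two_tensor_Delta] hopf_algebra_def)
  moreover have "bilin_eval sc (\<lambda>y z. S y * z) (\<Delta> x - u) = 0"
    using assms hopf_k_algebra
    by (intro bilin_eval_tker2)
      (simp_all add: antipode_add antipode_sc algebra_simps sc_mult_left[symmetric] sc_mult_right[symmetric])
  ultimately show ?thesis
    by (simp add: bilin_eval_diff[OF hopf_k_algebra])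
qed

lemma antipode_right_rep:
  assumes "tker2 sc (\<Delta> x - u)"
  shows "bilin_eval sc (\<lambda>y z. y * S z) u = sc (\<epsilon> x) 1"
proof -
  have "bilin_eval sc (\<lambda>y z. y * S z) (\<Delta> x) = sc (\<epsilon> x) 1"
    using hopf by (simp add: bilin_eval_two_tensor[OF hopf_k_algebra two_tensor_Delta] hopf_algebra_def)
  moreover have "bilin_eval sc (\<lambda>y z. y * S z) (\<Delta> x - u) = 0"
    using assms hopf_k_algebra
    by (intro bilin_eval_tker2)
      (simp_all add: antipode_add antipode_sc algebra_simps sc_mult_left[symmetric] sc_mult_right[symmetric])
  ultimately show ?thesis
    by (simp add: bilin_eval_diff[OF hopf_k_algebra])
qed

lemma multiplicative_matrix_antipode:
  assumes "multiplicative_matrix sc \<Delta> \<epsilon> I x" "i \<in> I" "j \<in> I"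
  shows "(\<Sum>s\<in>I. S (x i s) * x s j) = (if i = j then 1 else 0)"
    and "(\<Sum>s\<in>I. x i s * S (x s j)) = (if i = j then 1 else 0)"
proof -
  have rep: "tker2 sc (\<Delta> (x i j) - (\<Sum>s\<in>I. pt [x i s, x s j]))"
    and counit: "\<epsilon> (x i j) = (if i = j then 1 else 0)"
    using assms by (simp_all add: multiplicative_matrix_def)
  show "(\<Sum>s\<in>I. S (x i s) * x s j) = (if i = j then 1 else 0)"
    using antipode_left_rep[OF rep] counit hopf_k_algebra
    by (simp add: bilin_eval_sum bilin_eval_pt sc_one sc_zero)
  show "(\<Sum>s\<in>I. x i s * S (x s j)) = (if i = j then 1 else 0)"
    using antipode_right_rep[OF rep] counit hopf_k_algebra
    by (simp add: bilin_eval_sum bilin_eval_pt sc_one sc_zero)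
qed

lemma grouplike_antipode:
  assumes "grouplike sc \<Delta> \<epsilon> g"
  shows "S g * g = 1" "g * S g = 1"
proof -
  have rep: "tker2 sc (\<Delta> g - pt [g, g])" and counit: "\<epsilon> g = 1"
    using assms by (simp_all add: grouplike_def)
  show "S g * g = 1" "g * S g = 1"
    using antipode_left_rep[OF rep] antipode_right_rep[OF rep] counit hopf_k_algebra
    by (simp_all add: bilin_eval_pt sc_one)
qed

lemma grouplike_antipode_grouplike:
  assumes "grouplike sc \<Delta> \<epsilon> g"
  shows "grouplike sc \<Delta> \<epsilon> (S g)"
proof -
  have g: "tker2 sc (\<Delta> g - pt [g, g])" "\<epsilon> g = 1"
    using assms by (simp_all add: grouplike_def)
  have "tker2 sc (\<Delta> (g * S g) - tmul (pt [g, g]) (\<Delta> (S g)))"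
    using g by (intro tker2_Delta_mult_rep) (simp_all add: tker2.zero)
  then have "tker2 sc (\<Delta> 1 - tmul (pt [g, g]) (\<Delta> (S g)))"
    by (simp add: grouplike_antipode[OF assms])
  then have "tker2 sc (tmul (pt [g, g]) (\<Delta> (S g)) - pt [1, 1])"
    by (rule tker2_trans[OF tker2_sym tker2_Delta_one])
  then have "tker2 sc (tmul (pt [S g, S g]) (tmul (pt [g, g]) (\<Delta> (S g)) - pt [1, 1]))"
    by (rule tker2_tmul_right[OF hopf_k_algebra _ two_tensor_pt])
  then have "tker2 sc (\<Delta> (S g) - pt [S g, S g])"
    by (simp add: tmul_diff_right tmul_pt_pt tmul_pt_pt_left_cancel[OF two_tensor_Delta]
        grouplike_antipode[OF assms])
  moreover have "\<epsilon> (S g) = 1"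
    using counit_mult[of "S g" g] g grouplike_antipode[OF assms] hopf by (simp add: hopf_algebra_def)
  ultimately show ?thesis
    by (simp add: grouplike_def)
qed

lemma multiplicative_matrix_mult_grouplike:
  assumes x: "multiplicative_matrix sc \<Delta> \<epsilon> I x" and g: "grouplike sc \<Delta> \<epsilon> g"
  shows "multiplicative_matrix sc \<Delta> \<epsilon> I (\<lambda>i j. x i j * g)"
  unfolding multiplicative_matrix_def
proof (intro ballI conjI)
  fix i j assume "i \<in> I" "j \<in> I"
  then have "tker2 sc (\<Delta> (x i j * g) - tmul (\<Sum>s\<in>I. pt [x i s, x s j]) (pt [g, g]))"
    using x g by (intro tker2_Delta_mult_rep two_tensor_sum) (simp_all add: multiplicative_matrix_def grouplike_def)
  then show "tker2 sc (\<Delta> (x i j * g) - (\<Sum>s\<in>I. pt [x i s * g, x s j * g]))"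
    by (simp add: tmul_sum_left tmul_pt_pt)
  show "\<epsilon> (x i j * g) = (if i = j then 1 else 0)"
    using x g \<open>i \<in> I\<close> \<open>j \<in> I\<close> by (simp add: counit_mult multiplicative_matrix_def grouplike_def)
qed

end

section \<open>The Jordan plane\<close>

lemma jordan_matrix_left_inverse:
  fixes a N :: "nat \<Rightarrow> nat \<Rightarrow> 'a::ring_1" and D Di :: 'a
  assumes left_inv: "\<And>i j. i \<in> {1, 2} \<Longrightarrow> j \<in> {1, 2} \<Longrightarrow>
      (\<Sum>s\<in>{1, 2}. N i s * a s j) = (if i = j then 1 else 0)"
    and "D * Di = 1"
    and rel11: "a 1 2 * a 1 1 - a 1 1 * a 1 2 - a 1 1 * a 1 1 = - D"
    and rel12: "a 1 2 * a 2 1 - a 1 1 * a 2 2 - a 1 1 * a 2 1 = - D"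
    and rel21: "a 2 2 * a 1 1 - a 2 1 * a 1 2 - a 2 1 * a 1 1 = D"
    and rel22: "a 2 2 * a 2 1 - a 2 1 * a 2 2 - a 2 1 * a 2 1 = 0"
  shows "N 1 1 = (a 2 1 + a 2 2) * Di" "N 1 2 = (a 2 1 + a 2 2 - a 1 2 - a 1 1) * Di"
    "N 2 1 = - (a 2 1 * Di)" "N 2 2 = (a 1 1 - a 2 1) * Di"
proof -
  have NM: "N i 1 * a 1 j + N i 2 * a 2 j = (if i = j then 1 else 0)" if "i \<in> {1, 2}" "j \<in> {1, 2}" for i j
    using left_inv[OF that] by simp
  \<comment> \<open>Multiplying the relations with second row index \<open>j\<close> by row \<open>p\<close> of \<open>N\<close> and using
    \<open>N a = 1\<close> yields linear equations for \<open>N p 1 * D\<close> and \<open>N p 2 * D\<close>.\<close>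
  have row: "N p 1 * (a 1 2 * a j 1 - a 1 1 * a j 2 - a 1 1 * a j 1)
      + N p 2 * (a 2 2 * a j 1 - a 2 1 * a j 2 - a 2 1 * a j 1)
      = (N p 1 * a 1 2 + N p 2 * a 2 2) * a j 1 - (N p 1 * a 1 1 + N p 2 * a 2 1) * a j 2
        - (N p 1 * a 1 1 + N p 2 * a 2 1) * a j 1" for p j
    by (simp add: algebra_simps)
  have "N 1 1 * (- D) = - a 2 2 - a 2 1" "N 2 1 * (- D) = a 2 1"
    using row[of 1 2] row[of 2 2] rel12 rel22 NM[of 1 1] NM[of 1 2] NM[of 2 1] NM[of 2 2] by simp_all
  then have "N 1 1 * D = a 2 1 + a 2 2" "N 2 1 * D = - a 2 1"
    by (simp_all add: algebra_simps minus_equation_iff)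
  moreover have "N 1 1 * (- D) + N 1 2 * D = - a 1 2 - a 1 1" "N 2 1 * (- D) + N 2 2 * D = a 1 1"
    using row[of 1 1] row[of 2 1] rel11 rel21 NM[of 1 1] NM[of 1 2] NM[of 2 1] NM[of 2 2] by simp_all
  ultimately have "N 1 1 * D = a 2 1 + a 2 2" "N 1 2 * D = a 2 1 + a 2 2 - a 1 2 - a 1 1"
    "N 2 1 * D = - a 2 1" "N 2 2 * D = a 1 1 - a 2 1"
    by (simp_all add: algebra_simps)
  moreover have "N p q = N p q * D * Di" for p q
    using \<open>D * Di = 1\<close> by (simp add: mult.assoc)
  ultimately show "N 1 1 = (a 2 1 + a 2 2) * Di" "N 1 2 = (a 2 1 + a 2 2 - a 1 2 - a 1 1) * Di"
    "N 2 1 = - (a 2 1 * Di)" "N 2 2 = (a 1 1 - a 2 1) * Di"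
    by (metis mult_minus_left)+
qed

context
  fixes sc :: "'k::field \<Rightarrow> 'K::ring_1 \<Rightarrow> 'K" and \<Delta> :: "'K \<Rightarrow> ('K list \<Rightarrow>\<^sub>0 'k)"
    and \<epsilon> :: "'K \<Rightarrow> 'k" and S :: "'K \<Rightarrow> 'K" and a :: "nat \<Rightarrow> nat \<Rightarrow> 'K"
  assumes hopf: "hopf_algebra sc \<Delta> \<epsilon> S"
    and jordan: "jordan_comodule_algebra sc \<Delta> \<epsilon> a"
begin

lemma jordan_multiplicative_matrix: "multiplicative_matrix sc \<Delta> \<epsilon> {1, 2} a"
  using jordan unfolding multiplicative_matrix_def jordan_comodule_algebra_def
  by (auto intro!: teq_imp_tker2 two_tensor_Delta[OF hopf] two_tensor_add)

lemma jordan_relation: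
  assumes "i \<in> {1, 2}" "j \<in> {1, 2}"
  shows "a i 2 * a j 1 - a i 1 * a j 2 - a i 1 * a j 1 = sc (jr i j) (hcodet sc a)"
proof -
  obtain z where z: "\<And>i j. i \<in> {1, 2} \<Longrightarrow> j \<in> {1, 2} \<Longrightarrow>
      a i 2 * a j 1 - a i 1 * a j 2 - a i 1 * a j 1 = sc (jr i j) z"
    using jordan unfolding jordan_comodule_algebra_def by blast
  have "hcodet sc a = a 2 2 * a 1 1 - a 2 1 * a 1 2 - a 2 1 * a 1 1"
    using hopf_k_algebra[OF hopf] by (simp add: hcodet_def jr_def sc_one sc_minus sc_zero)
  also have "\<dots> = z"
    using z[of 2 1] hopf_k_algebra[OF hopf] by (simp add: jr_def sc_one)
  finally show ?thesis
    using z[OF assms] by simp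
qed

lemma jordan_relations:
  "a 1 2 * a 1 1 - a 1 1 * a 1 2 - a 1 1 * a 1 1 = - hcodet sc a"
  "a 1 2 * a 2 1 - a 1 1 * a 2 2 - a 1 1 * a 2 1 = - hcodet sc a"
  "a 2 2 * a 1 1 - a 2 1 * a 1 2 - a 2 1 * a 1 1 = hcodet sc a"
  "a 2 2 * a 2 1 - a 2 1 * a 2 2 - a 2 1 * a 2 1 = 0"
  using jordan_relation[of 1 1] jordan_relation[of 1 2] jordan_relation[of 2 1] jordan_relation[of 2 2]
    hopf_k_algebra[OF hopf]
  by (simp_all add: jr_def sc_one sc_minus sc_zero)

lemma tker2_Delta_hcodet: "tker2 sc (\<Delta> (hcodet sc a) - pt [hcodet sc a, hcodet sc a])"
proof -
  let ?D = "hcodet sc a"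
  let ?U = "\<lambda>i j. \<Sum>s\<in>{1, 2}. pt [a i s, a s j]"
  let ?p = "\<lambda>u v. a 2 u * a 1 v"
  have D: "?D = a 2 2 * a 1 1 - a 2 1 * a 1 2 - a 2 1 * a 1 1"
    using jordan_relations(3) by simp
  have U: "tker2 sc (\<Delta> (a i j) - ?U i j)" if "i \<in> {1, 2}" "j \<in> {1, 2}" for i j
    using jordan_multiplicative_matrix that unfolding multiplicative_matrix_def by blast
  have Delta_D: "tker2 sc (\<Delta> ?D - (tmul (?U 2 2) (?U 1 1) - tmul (?U 2 1) (?U 1 2) - tmul (?U 2 1) (?U 1 1)))"
    unfolding D by (intro tker2_Delta_diff[OF hopf] tker2_Delta_mult_rep[OF hopf] U two_tensor_sum) simp_all
  have expand: "tmul (?U 2 2) (?U 1 1) - tmul (?U 2 1) (?U 1 2) - tmul (?U 2 1) (?U 1 1) =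
      (\<Sum>u\<in>{1, 2}. \<Sum>v\<in>{1, 2}.
        pt [?p u v, a u 2 * a v 1] - pt [?p u v, a u 1 * a v 2] - pt [?p u v, a u 1 * a v 1])"
    by (simp only: tmul_sum_pt sum_subtractf)
  have relations: "tker2 sc ((\<Sum>u\<in>{1, 2}. \<Sum>v\<in>{1, 2}.
        pt [?p u v, a u 2 * a v 1] - pt [?p u v, a u 1 * a v 2] - pt [?p u v, a u 1 * a v 1])
      - (\<Sum>u\<in>{1, 2}. \<Sum>v\<in>{1, 2}. pt [?p u v, sc (jr u v) ?D]))"
    unfolding sum_subtractf[symmetric]
  proof (intro tker2_sum)
    fix u v :: nat assume "u \<in> {1, 2}" "v \<in> {1, 2}"
    then show "tker2 sc (pt [?p u v, a u 2 * a v 1] - pt [?p u v, a u 1 * a v 2] - pt [?p u v, a u 1 * a v 1]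
        - pt [?p u v, sc (jr u v) ?D])"
      using tker2_pt_snd_diff_diff by (simp add: jordan_relation[symmetric])
  qed
  have move_scalars: "tker2 sc ((\<Sum>u\<in>{1, 2}. \<Sum>v\<in>{1, 2}. pt [?p u v, sc (jr u v) ?D])
      - (\<Sum>u\<in>{1, 2}. \<Sum>v\<in>{1, 2}. pt [sc (jr u v) (?p u v), ?D]))"
    unfolding sum_subtractf[symmetric] by (intro tker2_sum tker2_pt_scale)
  have "tker2 sc (pt [\<Sum>u\<in>{1, 2}. \<Sum>v\<in>{1, 2}. sc (jr u v) (?p u v), ?D]
      - (\<Sum>u\<in>{1, 2}. \<Sum>v\<in>{1, 2}. pt [sc (jr u v) (?p u v), ?D]))"
    by (rule tker2_pt_fst_double_sum)
  then have collect: "tker2 sc (pt [?D, ?D] - (\<Sum>u\<in>{1, 2}. \<Sum>v\<in>{1, 2}. pt [sc (jr u v) (?p u v), ?D]))"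
    by (simp only: hcodet_def)
  show ?thesis
    using tker2_trans[OF tker2_trans[OF tker2_trans[OF Delta_D[unfolded expand] relations] move_scalars]
        tker2_sym[OF collect]] .
qed

lemma hcodet_grouplike: "grouplike sc \<Delta> \<epsilon> (hcodet sc a)"
proof -
  have "\<epsilon> (a i j) = (if i = j then 1 else 0)" if "i \<in> {1, 2}" "j \<in> {1, 2}" for i j
    using jordan_multiplicative_matrix that unfolding multiplicative_matrix_def by blast
  then have "\<epsilon> (hcodet sc a) = 1"
    by (simp add: jordan_relations(3)[symmetric] counit_diff[OF hopf] counit_mult[OF hopf])
  then show ?thesis
    using tker2_Delta_hcodet by (simp add: grouplike_def)
qed

lemma antipode_jordan:
  "S (a 1 1) = (a 2 1 + a 2 2) * S (hcodet sc a)"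
  "S (a 1 2) = (a 2 1 + a 2 2 - a 1 2 - a 1 1) * S (hcodet sc a)"
  "S (a 2 1) = - (a 2 1 * S (hcodet sc a))"
  "S (a 2 2) = (a 1 1 - a 2 1) * S (hcodet sc a)"
proof -
  have "(\<Sum>s\<in>{1, 2}. S (a i s) * a s j) = (if i = j then 1 else 0)" if "i \<in> {1, 2}" "j \<in> {1, 2}" for i j
    using multiplicative_matrix_antipode(1)[OF hopf jordan_multiplicative_matrix that] .
  note left_inverse = jordan_matrix_left_inverse[OF this
      grouplike_antipode(2)[OF hopf hcodet_grouplike] jordan_relations]
  show "S (a 1 1) = (a 2 1 + a 2 2) * S (hcodet sc a)"
    by (rule left_inverse(1))
  show "S (a 1 2) = (a 2 1 + a 2 2 - a 1 2 - a 1 1) * S (hcodet sc a)"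
    by (rule left_inverse(2))
  show "S (a 2 1) = - (a 2 1 * S (hcodet sc a))"
    by (rule left_inverse(3))
  show "S (a 2 2) = (a 1 1 - a 2 1) * S (hcodet sc a)"
    by (rule left_inverse(4))
qed

lemma antipode_jordan_mult_inverse:
  assumes "i \<in> {1, 2}" "j \<in> {1, 2}"
  shows "S (a i j * S (hcodet sc a)) = hcodet sc a * S (a i j)"
proof (rule matrix_left_inverse_eq_right_inverse[where B = "\<lambda>i j. a i j * S (hcodet sc a)", OF _ _ _ assms])
  let ?D = "hcodet sc a"
  fix i j :: nat assume "i \<in> {1, 2}" "j \<in> {1, 2}"
  then show "(\<Sum>s\<in>{1, 2}. S (a i s * S ?D) * (a s j * S ?D)) = (if i = j then 1 else 0)"
    by (intro multiplicative_matrix_antipode(1)[OF hopf]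
        multiplicative_matrix_mult_grouplike[OF hopf jordan_multiplicative_matrix]
        grouplike_antipode_grouplike[OF hopf hcodet_grouplike])
  have "a i s * S ?D * (?D * S (a s j)) = a i s * S (a s j)" for s
    using grouplike_antipode(1)[OF hopf hcodet_grouplike] by (simp add: mult.assoc[symmetric])
      (simp add: mult.assoc)
  then show "(\<Sum>s\<in>{1, 2}. a i s * S ?D * (?D * S (a s j))) = (if i = j then 1 else 0)"
    using multiplicative_matrix_antipode(2)[OF hopf jordan_multiplicative_matrix \<open>i \<in> _\<close> \<open>j \<in> _\<close>]
    by simp
qed simp

lemma antipode_antipode_jordan:
  "S (S (a 1 1)) = hcodet sc a * (a 1 1 - 2 * a 2 1) * S (hcodet sc a)"
  "S (S (a 1 2)) = hcodet sc a * (a 1 2 + 2 * a 1 1 - 2 * a 2 2 - 4 * a 2 1) * S (hcodet sc a)"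
  "S (S (a 2 1)) = hcodet sc a * a 2 1 * S (hcodet sc a)"
  "S (S (a 2 2)) = hcodet sc a * (a 2 2 + 2 * a 2 1) * S (hcodet sc a)"
proof -
  have "(4::'K) * x = 2 * x + 2 * x" for x
    using distrib_right[of "2::'K" 2 x] by simp
  (* One_nat_def would rewrite the index 1 to Suc 0 and block the rules for S (a 1 _). *)
  then show "S (S (a 1 1)) = hcodet sc a * (a 1 1 - 2 * a 2 1) * S (hcodet sc a)"
    "S (S (a 1 2)) = hcodet sc a * (a 1 2 + 2 * a 1 1 - 2 * a 2 2 - 4 * a 2 1) * S (hcodet sc a)"
    "S (S (a 2 1)) = hcodet sc a * a 2 1 * S (hcodet sc a)"
    "S (S (a 2 2)) = hcodet sc a * (a 2 2 + 2 * a 2 1) * S (hcodet sc a)"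
    by (simp_all add: antipode_jordan antipode_jordan_mult_inverse antipode_add[OF hopf]
        antipode_diff[OF hopf] antipode_uminus[OF hopf] mult_2 algebra_simps del: One_nat_def)
qed

end

theorem lemma5p8:
  fixes sc :: "'k::field \<Rightarrow> 'K::ring_1 \<Rightarrow> 'K"
    and \<Delta> :: "'K \<Rightarrow> ('K list \<Rightarrow>\<^sub>0 'k)" and \<epsilon> :: "'K \<Rightarrow> 'k" and S :: "'K \<Rightarrow> 'K"
    and a :: "nat \<Rightarrow> nat \<Rightarrow> 'K"
  assumes "hopf_algebra sc \<Delta> \<epsilon> S"
    and "jordan_comodule_algebra sc \<Delta> \<epsilon> a"
  defines "D \<equiv> hcodet sc a"
  shows "\<exists>Di. D * Di = 1 \<and> Di * D = 1 \<and>
    S (S (a 1 1)) = D * (a 1 1 - 2 * a 2 1) * Di \<and>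
    S (S (a 1 2)) = D * (a 1 2 + 2 * a 1 1 - 2 * a 2 2 - 4 * a 2 1) * Di \<and>
    S (S (a 2 1)) = D * a 2 1 * Di \<and>
    S (S (a 2 2)) = D * (a 2 2 + 2 * a 2 1) * Di"
proof -
  have "grouplike sc \<Delta> \<epsilon> D"
    unfolding D_def by (rule hcodet_grouplike[OF assms(1,2)])
  then show ?thesis
    using grouplike_antipode[OF assms(1)] antipode_antipode_jordan[OF assms(1,2), folded D_def]
    by blast
qed

end
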